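(* Let $n\ge 2$, $k\ge 1$, and let $f_i(x)=\frac12 a_ix^2-b_ix$ ($i=1,\dots,n$) be univariate functions satisfying Assumption (B) with parameters $\lambda,L,G$, where $F(x)=\frac1n\sum_{i=1}^n f_i(x)=\frac{\lambda}{2}x^2-bx$. Assume $\frac{L}{\lambda}\le\frac{k}{2\log(nk)}$. Then SGD with random reshuffling, run for $k$ epochs from an arbitrary $x_0\in\mathbb{R}$ with constant step size $\eta=\frac{\log(nk)}{\lambda nk}$, satisfies \[ \mathbb{E}\Big[F(x_k)-\inf_xF(x)\Big]\;\le\;\tilde{O}\left(\frac{\lambda}{n^2k^2}(x_0-x^* )^2+\frac{G^2L^2}{\lambda^3}\left(\frac{1}{n^2k^2}+\frac{1}{nk^3}\right)\right), \] where $x^*=\arg\min_x F(x)$, the expectation is over the $k$ independent uniformly random permutations, and $\tilde O(\cdot)$ hides a universal multiplicative constant and factors polylogarithmic in $n$ and $k$.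
   Context: Assumption (B) (parameters $\lambda,L,G>0$): $F(x)=\frac1n\sum_{i=1}^nf_i(x)$ is $\lambda$-strongly convex on $\mathbb{R}$; each $f_i(x)=\frac{a_i}{2}x^2-b_ix$ is convex (i.e. $a_i\ge 0$), has $L$-Lipschitz derivative (i.e. $a_i\le L$), and satisfies $|f_i'(x^* )|\le G$ where $x^*=\arg\min_xF(x)$. SGD with random reshuffling: for each of $k$ epochs, a fresh uniformly random permutation $\sigma_t$ of $\{1,\dots,n\}$ (independent across epochs) is drawn and the updates $x\leftarrow x-\eta f_{\sigma_t(j)}'(x)$ are performed for $j=1,\dots,n$ in order; $x_t$ is the iterate at the end of epoch $t$. *)

theory Defs
  imports "HOL-Probability.Probability" "HOL-Combinatorics.Multiset_Permutations"
begin

definition fcomp :: "(nat \<Rightarrow> real) \<Rightarrow> (nat \<Rightarrow> real) \<Rightarrow> nat \<Rightarrow> real \<Rightarrow> real" where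
  "fcomp a b i x = a i / 2 * x ^ 2 - b i * x"

definition fcomp' :: "(nat \<Rightarrow> real) \<Rightarrow> (nat \<Rightarrow> real) \<Rightarrow> nat \<Rightarrow> real \<Rightarrow> real" where
  "fcomp' a b i x = a i * x - b i"

definition Fobj :: "nat \<Rightarrow> (nat \<Rightarrow> real) \<Rightarrow> (nat \<Rightarrow> real) \<Rightarrow> real \<Rightarrow> real" where
  "Fobj n a b x = (\<Sum>i<n. fcomp a b i x) / real n"

definition sgd_step :: "real \<Rightarrow> (nat \<Rightarrow> real) \<Rightarrow> (nat \<Rightarrow> real) \<Rightarrow> real \<Rightarrow> nat \<Rightarrow> real" where
  "sgd_step \<eta> a b x i = x - \<eta> * fcomp' a b i x"

definition epoch :: "real \<Rightarrow> (nat \<Rightarrow> real) \<Rightarrow> (nat \<Rightarrow> real) \<Rightarrow> real \<Rightarrow> nat list \<Rightarrow> real" where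
  "epoch \<eta> a b x \<sigma> = foldl (sgd_step \<eta> a b) x \<sigma>"

fun rr_iterate :: "nat \<Rightarrow> real \<Rightarrow> (nat \<Rightarrow> real) \<Rightarrow> (nat \<Rightarrow> real) \<Rightarrow> nat \<Rightarrow> real \<Rightarrow> real pmf" where
  "rr_iterate n \<eta> a b 0 x0 = return_pmf x0"
| "rr_iterate n \<eta> a b (Suc t) x0 =
     bind_pmf (rr_iterate n \<eta> a b t x0)
       (\<lambda>y. map_pmf (epoch \<eta> a b y) (pmf_of_set (permutations_of_set {..<n})))"

end

theory Submission
  imports Defs
begin

(* For quadratic components one epoch along a permutation sigma is the affine map
   x - x* |-> P (x - x* ) - eta Z_sigma, whose slope P = prod_i (1 - eta a_i) does not depend on sigma
   and whose intercept Z_sigma is a damped sum of the gradients f_i'(x* ) taken in the order sigma.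
   These gradients sum to zero, so under a uniformly random permutation two distinct positions are
   negatively correlated with weight 1/(n-1). This bounds the second moment of the l-th prefix sum
   by l G^2, hence E Z_sigma^2 by n^3 (eta L)^2 G^2, while expanding the damping to first order
   shows that |E Z_sigma| is smaller by a factor of about 1/n. The first two moments of x_t - x*
   then satisfy closed recursions, and the step size makes P^k <= exp (- eta k sum_i a_i) = 1/(nk). *)

lemma permutation_lessThanD:
  assumes "\<sigma> \<in> permutations_of_set {..<n}"
  shows "length \<sigma> = n" and "j < n \<Longrightarrow> \<sigma> ! j < n"
  using assms length_finite_permutations_of_set[OF assms] permutations_of_setD[OF assms]
  by (auto dest: nth_mem)

lemma sum_nth_permutation:
  fixes f :: "nat \<Rightarrow> 'a::comm_monoid_add"
  assumes "\<sigma> \<in> permutations_of_set {..<n}"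
  shows "(\<Sum>j<n. f (\<sigma> ! j)) = (\<Sum>i<n. f i)"
proof -
  have "(\<Sum>j<n. f (\<sigma> ! j)) = sum_list (map f \<sigma>)"
    using permutation_lessThanD(1)[OF assms] by (simp add: sum_list_sum_nth atLeast0LessThan)
  also have "\<dots> = (\<Sum>i<n. f i)"
    using permutations_of_setD[OF assms] by (metis sum.distinct_set_conv_list)
  finally show ?thesis .
qed

lemma sum_off_diagonal:
  fixes h :: "nat \<Rightarrow> nat \<Rightarrow> 'a::ab_group_add"
  shows "(\<Sum>p\<in>{p. fst p < n \<and> snd p < n \<and> fst p \<noteq> snd p}. h (fst p) (snd p))
           = (\<Sum>i<n. \<Sum>m<n. h i m) - (\<Sum>i<n. h i i)"
proof -
  define D where "D = (\<lambda>i. (i, i)) ` {..<n}"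
  have off: "{p. fst p < n \<and> snd p < n \<and> fst p \<noteq> snd p} = {..<n} \<times> {..<n} - D"
    by (auto simp: D_def)
  have "D \<subseteq> {..<n} \<times> {..<n}" by (auto simp: D_def)
  then have "(\<Sum>p\<in>{..<n} \<times> {..<n} - D. h (fst p) (snd p))
      = (\<Sum>p\<in>{..<n} \<times> {..<n}. h (fst p) (snd p)) - (\<Sum>p\<in>D. h (fst p) (snd p))"
    by (intro sum_diff) auto
  also have "\<dots> = (\<Sum>i<n. \<Sum>m<n. h i m) - (\<Sum>i<n. h i i)"
    by (simp add: D_def sum.cartesian_product case_prod_beta sum.reindex inj_on_def)
  finally show ?thesis by (simp only: off)
qed

text \<open>Relabelling the values by a permutation that sends i to i' and m to m' maps the first
  set injectively into the second.\<close>

lemma card_permutations_pair_fiber_le: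
  assumes "j < n" "l < n" "j \<noteq> l" and "i < n" "m < n" "i \<noteq> m" and "i' < n" "m' < n" "i' \<noteq> m'"
  shows "card {\<sigma>\<in>permutations_of_set {..<n}. \<sigma> ! j = i \<and> \<sigma> ! l = m}
           \<le> card {\<sigma>\<in>permutations_of_set {..<n}. \<sigma> ! j = i' \<and> \<sigma> ! l = m'}"
proof (rule card_inj_on_le)
  define \<tau> where "\<tau> = Transposition.transpose i i'"
  define \<pi> where "\<pi> = Transposition.transpose (\<tau> m) m' \<circ> \<tau>"
  have "\<tau> m < n" "\<tau> m \<noteq> i'"
    using assms unfolding \<tau>_def Transposition.transpose_def by auto
  then have perm: "\<pi> permutes {..<n}"
    unfolding \<pi>_def \<tau>_def by (intro permutes_compose permutes_swap_id) (use assms in auto)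
  have \<pi>: "\<pi> i = i'" "\<pi> m = m'"
    using \<open>\<tau> m \<noteq> i'\<close> assms unfolding \<pi>_def \<tau>_def by auto
  show "inj_on (map \<pi>) {\<sigma>\<in>permutations_of_set {..<n}. \<sigma> ! j = i \<and> \<sigma> ! l = m}"
    using inj_mapI[OF permutes_inj[OF perm]] by (rule inj_on_subset) simp
  show "map \<pi> ` {\<sigma>\<in>permutations_of_set {..<n}. \<sigma> ! j = i \<and> \<sigma> ! l = m}
          \<subseteq> {\<sigma>\<in>permutations_of_set {..<n}. \<sigma> ! j = i' \<and> \<sigma> ! l = m'}"
  proof
    fix \<rho> assume "\<rho> \<in> map \<pi> ` {\<sigma>\<in>permutations_of_set {..<n}. \<sigma> ! j = i \<and> \<sigma> ! l = m}"
    then obtain \<sigma> where \<sigma>: "\<sigma> \<in> permutations_of_set {..<n}" "\<sigma> ! j = i" "\<sigma> ! l = m"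
      and \<rho>: "\<rho> = map \<pi> \<sigma>" by auto
    have "set \<rho> = {..<n}" "distinct \<rho>"
      using permutations_of_setD[OF \<sigma>(1)] permutes_image[OF perm] permutes_inj_on[OF perm]
      by (auto simp: \<rho> distinct_map)
    moreover have "\<rho> ! j = i'" "\<rho> ! l = m'"
      using permutation_lessThanD(1)[OF \<sigma>(1)] assms \<sigma> \<pi> by (auto simp: \<rho>)
    ultimately show "\<rho> \<in> {\<sigma>\<in>permutations_of_set {..<n}. \<sigma> ! j = i' \<and> \<sigma> ! l = m'}"
      by (simp add: permutations_of_set_def)
  qed
  show "finite {\<sigma>\<in>permutations_of_set {..<n}. \<sigma> ! j = i' \<and> \<sigma> ! l = m'}" by simp
qed

lemma sum_permutations_pair:
  fixes h :: "nat \<Rightarrow> nat \<Rightarrow> real"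
  assumes "j < n" "l < n" "j \<noteq> l"
  shows "(\<Sum>\<sigma>\<in>permutations_of_set {..<n}. h (\<sigma> ! j) (\<sigma> ! l))
          = card (permutations_of_set {..<n}) / (real n * (real n - 1))
              * ((\<Sum>i<n. \<Sum>m<n. h i m) - (\<Sum>i<n. h i i))"
proof -
  define Ps where "Ps = permutations_of_set {..<n}"
  define Off where "Off = {p. fst p < n \<and> snd p < n \<and> fst p \<noteq> snd p}"
  define pos where "pos \<sigma> = (\<sigma> ! j, \<sigma> ! l)" for \<sigma> :: "nat list"
  define K where "K = card {\<sigma>\<in>Ps. pos \<sigma> = (j, l)}"
  have fin: "finite Ps" "finite Off"
    by (auto simp: Ps_def Off_def intro: finite_subset[of _ "{..<n} \<times> {..<n}"])
  have pos: "pos ` Ps \<subseteq> Off"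
  proof (rule image_subsetI)
    fix \<sigma> assume "\<sigma> \<in> Ps"
    then have "distinct \<sigma>" "length \<sigma> = n" "\<sigma> ! j < n" "\<sigma> ! l < n"
      using assms permutations_of_setD(2) permutation_lessThanD by (auto simp: Ps_def)
    then show "pos \<sigma> \<in> Off"
      using assms by (simp add: Off_def pos_def nth_eq_iff_index_eq)
  qed
  have K: "card {\<sigma>\<in>Ps. pos \<sigma> = p} = K" if "p \<in> Off" for p
    using that assms card_permutations_pair_fiber_le[of j n l "fst p" "snd p" j l]
      card_permutations_pair_fiber_le[of j n l j l "fst p" "snd p"]
    by (cases p) (auto simp: K_def Ps_def Off_def pos_def)
  have "(\<Sum>\<sigma>\<in>Ps. h (\<sigma> ! j) (\<sigma> ! l)) = (\<Sum>p\<in>Off. \<Sum>\<sigma>\<in>{\<sigma>\<in>Ps. pos \<sigma> = p}. h (fst p) (snd p))"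
    by (subst sum.group[OF fin pos, symmetric]) (auto simp: pos_def intro!: sum.cong)
  also have "\<dots> = K * (\<Sum>p\<in>Off. h (fst p) (snd p))"
    by (simp add: K sum_distrib_left)
  finally have sum_eq: "(\<Sum>\<sigma>\<in>Ps. h (\<sigma> ! j) (\<sigma> ! l)) = K * (\<Sum>p\<in>Off. h (fst p) (snd p))" .
  have "card Ps = (\<Sum>p\<in>Off. card {\<sigma>\<in>Ps. pos \<sigma> = p})"
    using sum.group[OF fin pos, of "\<lambda>_. 1::nat"] by simp
  then have "real (card Ps) = K * real (card Off)"
    by (simp add: K)
  moreover have "real (card Off) = real n * (real n - 1)"
    using sum_off_diagonal[where n = n and h = "\<lambda>_ _. 1::real"] by (simp add: Off_def algebra_simps)
  moreover have "real n * (real n - 1) \<noteq> 0"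
    using assms by auto
  ultimately show ?thesis
    using sum_eq sum_off_diagonal[where n = n and h = h] by (simp add: Ps_def Off_def)
qed

lemma sum_permutations_centered_pair:
  fixes g c :: "nat \<Rightarrow> real"
  assumes "(\<Sum>i<n. g i) = 0" and "j < n" "l < n" "j \<noteq> l"
  shows "(\<Sum>\<sigma>\<in>permutations_of_set {..<n}. g (\<sigma> ! j) * c (\<sigma> ! l))
          = - (card (permutations_of_set {..<n}) / (real n * (real n - 1))) * (\<Sum>i<n. g i * c i)"
  using sum_permutations_pair[where h = "\<lambda>i m. g i * c m", OF assms(2-4)] assms(1)
  by (simp add: sum_product[symmetric])

definition prefix_sum :: "(nat \<Rightarrow> real) \<Rightarrow> nat list \<Rightarrow> nat \<Rightarrow> real" where
  "prefix_sum g \<sigma> l = (\<Sum>j<l. g (\<sigma> ! j))"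

lemma sum_permutations_prefix_sum_sq:
  fixes g :: "nat \<Rightarrow> real"
  assumes "(\<Sum>i<n. g i) = 0" and "\<forall>i<n. \<bar>g i\<bar> \<le> G" and "l \<le> n"
  shows "(\<Sum>\<sigma>\<in>permutations_of_set {..<n}. (prefix_sum g \<sigma> l)\<^sup>2)
           \<le> real l * card (permutations_of_set {..<n}) * G\<^sup>2"
proof -
  define Ps where "Ps = permutations_of_set {..<n}"
  have pair: "(\<Sum>\<sigma>\<in>Ps. g (\<sigma> ! j) * g (\<sigma> ! j')) \<le> (if j = j' then card Ps * G\<^sup>2 else 0)"
    if "j < l" "j' < l" for j j'
  proof (cases "j = j'")
    case True
    have "(g (\<sigma> ! j))\<^sup>2 \<le> G\<^sup>2" if "\<sigma> \<in> Ps" for \<sigma>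
      using assms(2) permutation_lessThanD(2)[OF \<open>\<sigma> \<in> Ps\<close>[unfolded Ps_def], of j]
        \<open>j < l\<close> \<open>l \<le> n\<close> by (intro power2_le_iff_abs_le[THEN iffD2]) fastforce+
    then show ?thesis
      using True sum_mono[of Ps "\<lambda>\<sigma>. (g (\<sigma> ! j))\<^sup>2" "\<lambda>_. G\<^sup>2"] by (simp add: power2_eq_square)
  next
    case False
    have "0 \<le> real n * (real n - 1)"
      by (cases n) auto
    moreover have "0 \<le> (\<Sum>i<n. g i * g i)"
      by (intro sum_nonneg) simp
    ultimately have "0 \<le> card Ps / (real n * (real n - 1)) * (\<Sum>i<n. g i * g i)"
      by (simp add: divide_nonneg_nonneg)
    then show ?thesis
      using sum_permutations_centered_pair[OF assms(1), of j j' g] False that \<open>l \<le> n\<close>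
      by (simp add: Ps_def)
  qed
  have "(\<Sum>\<sigma>\<in>Ps. (prefix_sum g \<sigma> l)\<^sup>2) = (\<Sum>\<sigma>\<in>Ps. \<Sum>j<l. \<Sum>j'<l. g (\<sigma> ! j) * g (\<sigma> ! j'))"
    by (simp add: prefix_sum_def power2_eq_square sum_product)
  also have "\<dots> = (\<Sum>j<l. \<Sum>j'<l. \<Sum>\<sigma>\<in>Ps. g (\<sigma> ! j) * g (\<sigma> ! j'))"
    by (subst sum.swap) (rule sum.cong[OF refl], rule sum.swap)
  also have "\<dots> \<le> (\<Sum>j<l. \<Sum>j'<l. if j = j' then card Ps * G\<^sup>2 else 0)"
    by (intro sum_mono pair) auto
  finally show ?thesis by (simp add: Ps_def)
qed

lemma sum_permutations_abs_prefix_sum: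
  fixes g :: "nat \<Rightarrow> real"
  assumes "(\<Sum>i<n. g i) = 0" and "\<forall>i<n. \<bar>g i\<bar> \<le> G" and "0 \<le> G" and "l \<le> n"
  shows "(\<Sum>\<sigma>\<in>permutations_of_set {..<n}. \<bar>prefix_sum g \<sigma> l\<bar>)
           \<le> card (permutations_of_set {..<n}) * (sqrt (real n) * G)"
proof (rule power2_le_imp_le)
  define Ps where "Ps = permutations_of_set {..<n}"
  have "(\<Sum>\<sigma>\<in>Ps. \<bar>prefix_sum g \<sigma> l\<bar>)\<^sup>2 \<le> (\<Sum>\<sigma>\<in>Ps. \<bar>prefix_sum g \<sigma> l\<bar>\<^sup>2) * card Ps"
    by (rule sum_squared_le_sum_of_squares)
  also have "\<dots> \<le> (real l * card Ps * G\<^sup>2) * card Ps"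
    using sum_permutations_prefix_sum_sq[OF assms(1,2,4)] unfolding Ps_def power2_abs
    by (rule mult_right_mono) simp
  also have "\<dots> \<le> (real n * card Ps * G\<^sup>2) * card Ps"
    using \<open>l \<le> n\<close> by (intro mult_right_mono) auto
  also have "\<dots> = (card Ps * (sqrt (real n) * G))\<^sup>2"
    by (simp add: power_mult_distrib power2_eq_square)
  finally show "(\<Sum>\<sigma>\<in>Ps. \<bar>prefix_sum g \<sigma> l\<bar>)\<^sup>2 \<le> (card Ps * (sqrt (real n) * G))\<^sup>2" .
qed (use assms(3) in simp)

definition epoch_noise :: "(nat \<Rightarrow> real) \<Rightarrow> (nat \<Rightarrow> real) \<Rightarrow> nat list \<Rightarrow> real" where
  "epoch_noise c g \<sigma> = foldl (\<lambda>z i. (1 - c i) * z + g i) 0 \<sigma>"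

lemma epoch_minus_fixed_point:
  "epoch \<eta> a b x \<sigma> - xs = prod_list (map (\<lambda>i. 1 - \<eta> * a i) \<sigma>) * (x - xs)
     - \<eta> * epoch_noise (\<lambda>i. \<eta> * a i) (\<lambda>i. fcomp' a b i xs) \<sigma>"
proof (induction \<sigma> rule: rev_induct)
  case Nil
  then show ?case by (simp add: epoch_def epoch_noise_def)
next
  case (snoc i \<sigma>)
  have "epoch \<eta> a b x (\<sigma> @ [i]) - xs
      = (1 - \<eta> * a i) * (epoch \<eta> a b x \<sigma> - xs) - \<eta> * fcomp' a b i xs"
    by (simp add: epoch_def sgd_step_def fcomp'_def algebra_simps)
  also have "\<dots> = prod_list (map (\<lambda>i. 1 - \<eta> * a i) (\<sigma> @ [i])) * (x - xs)
     - \<eta> * epoch_noise (\<lambda>i. \<eta> * a i) (\<lambda>i. fcomp' a b i xs) (\<sigma> @ [i])"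
    by (simp add: snoc.IH epoch_noise_def algebra_simps)
  finally show ?case .
qed

definition weighted_prefix_sum :: "(nat \<Rightarrow> real) \<Rightarrow> (nat \<Rightarrow> real) \<Rightarrow> nat list \<Rightarrow> real" where
  "weighted_prefix_sum c g \<sigma> = (\<Sum>l<length \<sigma>. c (\<sigma> ! l) * prefix_sum g \<sigma> l)"

definition weighted_abs_prefix_sum :: "(nat \<Rightarrow> real) \<Rightarrow> (nat \<Rightarrow> real) \<Rightarrow> nat list \<Rightarrow> real" where
  "weighted_abs_prefix_sum c g \<sigma> = (\<Sum>l<length \<sigma>. c (\<sigma> ! l) * \<bar>prefix_sum g \<sigma> l\<bar>)"

lemma prefix_sum_append:
  "l \<le> length \<sigma> \<Longrightarrow> prefix_sum g (\<sigma> @ \<tau>) l = prefix_sum g \<sigma> l"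
  unfolding prefix_sum_def by (intro sum.cong refl) (auto simp: nth_append)

lemma prefix_sum_snoc_length:
  "prefix_sum g (\<sigma> @ [i]) (length (\<sigma> @ [i])) = prefix_sum g \<sigma> (length \<sigma>) + g i"
  by (simp add: prefix_sum_def nth_append)

lemma weighted_prefix_sum_snoc:
  "weighted_prefix_sum c g (\<sigma> @ [i]) = weighted_prefix_sum c g \<sigma> + c i * prefix_sum g \<sigma> (length \<sigma>)"
proof -
  have "(\<Sum>l<length \<sigma>. c ((\<sigma> @ [i]) ! l) * prefix_sum g (\<sigma> @ [i]) l) = weighted_prefix_sum c g \<sigma>"
    unfolding weighted_prefix_sum_def by (intro sum.cong refl) (simp add: nth_append prefix_sum_append)
  then show ?thesis
    by (simp add: weighted_prefix_sum_def prefix_sum_append)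
qed

lemma weighted_abs_prefix_sum_snoc:
  "weighted_abs_prefix_sum c g (\<sigma> @ [i])
     = weighted_abs_prefix_sum c g \<sigma> + c i * \<bar>prefix_sum g \<sigma> (length \<sigma>)\<bar>"
proof -
  have "(\<Sum>l<length \<sigma>. c ((\<sigma> @ [i]) ! l) * \<bar>prefix_sum g (\<sigma> @ [i]) l\<bar>) = weighted_abs_prefix_sum c g \<sigma>"
    unfolding weighted_abs_prefix_sum_def by (intro sum.cong refl) (simp add: nth_append prefix_sum_append)
  then show ?thesis
    by (simp add: weighted_abs_prefix_sum_def prefix_sum_append)
qed

lemma damped_error_step:
  fixes T U V C S d :: real
  assumes "0 \<le> d" and "d \<le> 1" and "0 \<le> C" and "\<bar>T\<bar> \<le> V" and "\<bar>T + U\<bar> \<le> C * V"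
  shows "\<bar>(1 - d) * T - d * S\<bar> \<le> V + d * \<bar>S\<bar>"
    and "\<bar>(1 - d) * T - d * S + (U + d * S)\<bar> \<le> (C + d) * (V + d * \<bar>S\<bar>)"
proof -
  have "\<bar>(1 - d) * T - d * S\<bar> \<le> (1 - d) * \<bar>T\<bar> + d * \<bar>S\<bar>"
    using assms(1,2) abs_triangle_ineq4[of "(1 - d) * T" "d * S"] by (simp add: abs_mult)
  also have "\<dots> \<le> V + d * \<bar>S\<bar>"
    using assms(1,2,4) mult_left_le_one_le[of "\<bar>T\<bar>" "1 - d"] by simp
  finally show "\<bar>(1 - d) * T - d * S\<bar> \<le> V + d * \<bar>S\<bar>" .
  have "\<bar>(1 - d) * T - d * S + (U + d * S)\<bar> = \<bar>(T + U) - d * T\<bar>"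
    by (simp add: algebra_simps)
  also have "\<dots> \<le> C * V + d * V"
    using assms abs_triangle_ineq4[of "T + U" "d * T"] mult_left_mono[OF assms(4,1)]
    by (simp add: abs_mult)
  also have "\<dots> \<le> (C + d) * (V + d * \<bar>S\<bar>)"
    using assms by (simp add: algebra_simps)
  finally show "\<bar>(1 - d) * T - d * S + (U + d * S)\<bar> \<le> (C + d) * (V + d * \<bar>S\<bar>)" .
qed

text \<open>To first order in c the damped sum is the plain prefix sum minus the weighted
  prefix sum; the second-order error is controlled by the total damping.\<close>

lemma epoch_noise_bounds:
  assumes "\<forall>i\<in>set \<sigma>. 0 \<le> c i \<and> c i \<le> 1"
  shows "\<bar>epoch_noise c g \<sigma> - prefix_sum g \<sigma> (length \<sigma>)\<bar> \<le> weighted_abs_prefix_sum c g \<sigma> \<and>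
         \<bar>epoch_noise c g \<sigma> - prefix_sum g \<sigma> (length \<sigma>) + weighted_prefix_sum c g \<sigma>\<bar>
           \<le> sum_list (map c \<sigma>) * weighted_abs_prefix_sum c g \<sigma>"
  using assms
proof (induction \<sigma> rule: rev_induct)
  case Nil
  then show ?case
    by (simp add: epoch_noise_def prefix_sum_def weighted_prefix_sum_def weighted_abs_prefix_sum_def)
next
  case (snoc i \<sigma>)
  let ?T = "epoch_noise c g \<sigma> - prefix_sum g \<sigma> (length \<sigma>)" and ?S = "prefix_sum g \<sigma> (length \<sigma>)"
  have "epoch_noise c g (\<sigma> @ [i]) - prefix_sum g (\<sigma> @ [i]) (length (\<sigma> @ [i])) = (1 - c i) * ?T - c i * ?S"
    using prefix_sum_snoc_length[of g \<sigma> i] by (simp add: epoch_noise_def algebra_simps)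
  moreover have "0 \<le> sum_list (map c \<sigma>)"
    using snoc.prems by (intro sum_list_nonneg) auto
  ultimately show ?case
    using damped_error_step[of "c i" "sum_list (map c \<sigma>)" ?T "weighted_abs_prefix_sum c g \<sigma>"
        "weighted_prefix_sum c g \<sigma>" ?S] snoc
    by (simp add: weighted_prefix_sum_snoc weighted_abs_prefix_sum_snoc add.commute)
qed

lemma epoch_noise_permutation_bounds:
  assumes "\<sigma> \<in> permutations_of_set {..<n}" and "\<forall>i<n. 0 \<le> c i \<and> c i \<le> 1"
    and "(\<Sum>i<n. g i) = 0"
  shows "\<bar>epoch_noise c g \<sigma>\<bar> \<le> weighted_abs_prefix_sum c g \<sigma>"
    and "\<bar>epoch_noise c g \<sigma> + weighted_prefix_sum c g \<sigma>\<bar>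
           \<le> (\<Sum>i<n. c i) * weighted_abs_prefix_sum c g \<sigma>"
proof -
  have len: "length \<sigma> = n"
    using permutation_lessThanD(1)[OF assms(1)] .
  have "\<forall>i\<in>set \<sigma>. 0 \<le> c i \<and> c i \<le> 1"
    using assms(2) permutations_of_setD(1)[OF assms(1)] by auto
  moreover have "prefix_sum g \<sigma> (length \<sigma>) = 0"
    using sum_nth_permutation[OF assms(1), of g] assms(3) by (simp add: prefix_sum_def len)
  moreover have "sum_list (map c \<sigma>) = (\<Sum>i<n. c i)"
    using sum_nth_permutation[OF assms(1), of c] by (simp add: sum_list_sum_nth len atLeast0LessThan)
  ultimately show "\<bar>epoch_noise c g \<sigma>\<bar> \<le> weighted_abs_prefix_sum c g \<sigma>"
    and "\<bar>epoch_noise c g \<sigma> + weighted_prefix_sum c g \<sigma>\<bar>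
           \<le> (\<Sum>i<n. c i) * weighted_abs_prefix_sum c g \<sigma>"
    using epoch_noise_bounds[of \<sigma> c g] by simp_all
qed

lemma epoch_noise_sq_le:
  fixes c g :: "nat \<Rightarrow> real"
  assumes "\<sigma> \<in> permutations_of_set {..<n}"
    and "\<forall>i<n. 0 \<le> c i \<and> c i \<le> cm" and "cm \<le> 1" and "(\<Sum>i<n. g i) = 0"
  shows "(epoch_noise c g \<sigma>)\<^sup>2 \<le> real n * cm\<^sup>2 * (\<Sum>l<n. (prefix_sum g \<sigma> l)\<^sup>2)"
proof -
  have c1: "\<forall>i<n. 0 \<le> c i \<and> c i \<le> 1"
    using assms(2,3) by force
  have "(epoch_noise c g \<sigma>)\<^sup>2 \<le> (\<Sum>l<n. c (\<sigma> ! l) * \<bar>prefix_sum g \<sigma> l\<bar>)\<^sup>2"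
    using power_mono[OF epoch_noise_permutation_bounds(1)[OF assms(1) c1 assms(4)] abs_ge_zero, of 2]
    by (simp add: weighted_abs_prefix_sum_def permutation_lessThanD(1)[OF assms(1)])
  also have "\<dots> \<le> (\<Sum>l<n. (c (\<sigma> ! l) * \<bar>prefix_sum g \<sigma> l\<bar>)\<^sup>2) * real n"
    using sum_squared_le_sum_of_squares[of _ "{..<n}"] by simp
  also have "\<dots> \<le> (\<Sum>l<n. cm\<^sup>2 * (prefix_sum g \<sigma> l)\<^sup>2) * real n"
  proof (intro mult_right_mono sum_mono)
    fix l assume "l \<in> {..<n}"
    then have "0 \<le> c (\<sigma> ! l)" "c (\<sigma> ! l) \<le> cm"
      using assms(2) permutation_lessThanD(2)[OF assms(1)] by auto
    then show "(c (\<sigma> ! l) * \<bar>prefix_sum g \<sigma> l\<bar>)\<^sup>2 \<le> cm\<^sup>2 * (prefix_sum g \<sigma> l)\<^sup>2"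
      by (simp add: power_mult_distrib power_mono mult_right_mono)
  qed simp
  finally show ?thesis
    by (simp add: sum_distrib_left mult_ac)
qed

lemma sum_permutations_epoch_noise_sq:
  fixes c g :: "nat \<Rightarrow> real"
  assumes "\<forall>i<n. 0 \<le> c i \<and> c i \<le> cm" and "cm \<le> 1"
    and "(\<Sum>i<n. g i) = 0" and "\<forall>i<n. \<bar>g i\<bar> \<le> G"
  shows "(\<Sum>\<sigma>\<in>permutations_of_set {..<n}. (epoch_noise c g \<sigma>)\<^sup>2)
           \<le> card (permutations_of_set {..<n}) * (real n ^ 3 * cm\<^sup>2 * G\<^sup>2)"
proof -
  define Ps where "Ps = permutations_of_set {..<n}"
  have "(\<Sum>\<sigma>\<in>Ps. (epoch_noise c g \<sigma>)\<^sup>2) \<le> (\<Sum>\<sigma>\<in>Ps. real n * cm\<^sup>2 * (\<Sum>l<n. (prefix_sum g \<sigma> l)\<^sup>2))"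
    using epoch_noise_sq_le[OF _ assms(1-3)] by (intro sum_mono) (simp add: Ps_def)
  also have "\<dots> = real n * cm\<^sup>2 * (\<Sum>l<n. \<Sum>\<sigma>\<in>Ps. (prefix_sum g \<sigma> l)\<^sup>2)"
    by (simp add: sum_distrib_left[symmetric] sum.swap[of _ Ps])
  also have "\<dots> \<le> real n * cm\<^sup>2 * (\<Sum>l<n. real n * card Ps * G\<^sup>2)"
  proof (intro mult_left_mono sum_mono)
    fix l assume "l \<in> {..<n}"
    then have "(\<Sum>\<sigma>\<in>Ps. (prefix_sum g \<sigma> l)\<^sup>2) \<le> real l * card Ps * G\<^sup>2"
      using sum_permutations_prefix_sum_sq[OF assms(3,4)] by (simp add: Ps_def)
    also have "\<dots> \<le> real n * card Ps * G\<^sup>2"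
      using \<open>l \<in> {..<n}\<close> by (intro mult_right_mono) auto
    finally show "(\<Sum>\<sigma>\<in>Ps. (prefix_sum g \<sigma> l)\<^sup>2) \<le> real n * card Ps * G\<^sup>2" .
  qed simp
  also have "\<dots> = card Ps * (real n ^ 3 * cm\<^sup>2 * G\<^sup>2)"
    by (simp add: power3_eq_cube power2_eq_square)
  finally show ?thesis
    by (simp add: Ps_def)
qed

lemma abs_sum_permutations_weighted_prefix_sum:
  fixes c g :: "nat \<Rightarrow> real"
  assumes "\<forall>i<n. 0 \<le> c i \<and> c i \<le> cm"
    and "(\<Sum>i<n. g i) = 0" and "\<forall>i<n. \<bar>g i\<bar> \<le> G"
  shows "\<bar>\<Sum>\<sigma>\<in>permutations_of_set {..<n}. weighted_prefix_sum c g \<sigma>\<bar>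
           \<le> card (permutations_of_set {..<n}) * (real n * cm * G)"
proof -
  define Ps where "Ps = permutations_of_set {..<n}"
  define q where "q = card Ps / (real n * (real n - 1)) * (\<Sum>i<n. g i * c i)"
  have "\<bar>g i * c i\<bar> \<le> cm * G" if "i < n" for i
    using assms(1,3) that mult_mono[of "c i" cm "\<bar>g i\<bar>" G] by (auto simp: abs_mult mult.commute)
  then have inner: "\<bar>\<Sum>i<n. g i * c i\<bar> \<le> real n * cm * G"
    using sum_mono[of "{..<n}" "\<lambda>i. \<bar>g i * c i\<bar>" "\<lambda>_. cm * G"]
    by (intro order_trans[OF sum_abs]) (simp add: mult.assoc)
  have "(\<Sum>\<sigma>\<in>Ps. weighted_prefix_sum c g \<sigma>) = (\<Sum>\<sigma>\<in>Ps. \<Sum>l<n. \<Sum>j<l. g (\<sigma> ! j) * c (\<sigma> ! l))"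
    by (intro sum.cong refl)
      (simp add: Ps_def weighted_prefix_sum_def prefix_sum_def permutation_lessThanD(1)
         sum_distrib_left mult.commute)
  also have "\<dots> = (\<Sum>l<n. \<Sum>j<l. \<Sum>\<sigma>\<in>Ps. g (\<sigma> ! j) * c (\<sigma> ! l))"
    by (subst sum.swap) (rule sum.cong[OF refl], rule sum.swap)
  also have "\<dots> = (\<Sum>l<n. \<Sum>j<l. - q)"
    using sum_permutations_centered_pair[OF assms(2)] by (intro sum.cong refl) (simp add: Ps_def q_def)
  finally have "\<bar>\<Sum>\<sigma>\<in>Ps. weighted_prefix_sum c g \<sigma>\<bar> = \<bar>q\<bar> * (\<Sum>l<n. real l)"
    by (simp add: abs_mult sum_negf sum_nonneg flip: sum_distrib_right)
  also have "\<dots> \<le> \<bar>q\<bar> * (real n * (real n - 1))"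
    using sum_mono[of "{..<n}" real "\<lambda>_. real n - 1"] by (intro mult_left_mono) force+
  also have "\<dots> \<le> card Ps * \<bar>\<Sum>i<n. g i * c i\<bar>"
    by (cases "real n * (real n - 1) = 0") (simp_all add: q_def abs_mult)
  also have "\<dots> \<le> card Ps * (real n * cm * G)"
    using inner by (rule mult_left_mono) simp
  finally show ?thesis by (simp add: Ps_def)
qed

lemma sum_permutations_weighted_abs_prefix_sum:
  fixes c g :: "nat \<Rightarrow> real"
  assumes "\<forall>i<n. 0 \<le> c i \<and> c i \<le> cm"
    and "(\<Sum>i<n. g i) = 0" and "\<forall>i<n. \<bar>g i\<bar> \<le> G" and "0 \<le> G"
  shows "(\<Sum>\<sigma>\<in>permutations_of_set {..<n}. weighted_abs_prefix_sum c g \<sigma>)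
           \<le> card (permutations_of_set {..<n}) * (real n * cm * (sqrt (real n) * G))"
proof -
  define Ps where "Ps = permutations_of_set {..<n}"
  have "(\<Sum>\<sigma>\<in>Ps. weighted_abs_prefix_sum c g \<sigma>) = (\<Sum>l<n. \<Sum>\<sigma>\<in>Ps. c (\<sigma> ! l) * \<bar>prefix_sum g \<sigma> l\<bar>)"
    by (subst sum.swap, intro sum.cong refl)
      (simp add: Ps_def weighted_abs_prefix_sum_def permutation_lessThanD(1))
  also have "\<dots> \<le> (\<Sum>l<n. cm * (card Ps * (sqrt (real n) * G)))"
  proof (intro sum_mono)
    fix l assume "l \<in> {..<n}"
    then have cm: "0 \<le> cm" "\<And>\<sigma>. \<sigma> \<in> Ps \<Longrightarrow> c (\<sigma> ! l) \<le> cm"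
      using assms(1) permutation_lessThanD(2) by (fastforce simp: Ps_def)+
    have "(\<Sum>\<sigma>\<in>Ps. c (\<sigma> ! l) * \<bar>prefix_sum g \<sigma> l\<bar>) \<le> (\<Sum>\<sigma>\<in>Ps. cm * \<bar>prefix_sum g \<sigma> l\<bar>)"
      by (intro sum_mono mult_right_mono cm) simp_all
    also have "\<dots> \<le> cm * (card Ps * (sqrt (real n) * G))"
      using sum_permutations_abs_prefix_sum[OF assms(2-4)] \<open>l \<in> {..<n}\<close> cm(1)
      by (simp add: Ps_def mult_left_mono flip: sum_distrib_left)
    finally show "(\<Sum>\<sigma>\<in>Ps. c (\<sigma> ! l) * \<bar>prefix_sum g \<sigma> l\<bar>) \<le> cm * (card Ps * (sqrt (real n) * G))" .
  qed
  finally show ?thesis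
    by (simp add: Ps_def mult_ac)
qed

lemma abs_sum_permutations_epoch_noise:
  fixes c g :: "nat \<Rightarrow> real"
  assumes "\<forall>i<n. 0 \<le> c i \<and> c i \<le> cm" and "cm \<le> 1"
    and "(\<Sum>i<n. g i) = 0" and "\<forall>i<n. \<bar>g i\<bar> \<le> G" and "0 \<le> G"
  shows "\<bar>\<Sum>\<sigma>\<in>permutations_of_set {..<n}. epoch_noise c g \<sigma>\<bar>
           \<le> card (permutations_of_set {..<n})
              * (real n * cm * G + (\<Sum>i<n. c i) * (real n * cm * (sqrt (real n) * G)))"
proof -
  define Ps where "Ps = permutations_of_set {..<n}"
  define Ct where "Ct = (\<Sum>i<n. c i)"
  have c1: "\<forall>i<n. 0 \<le> c i \<and> c i \<le> 1"
    using assms(1,2) by force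
  have "0 \<le> Ct"
    using assms(1) by (auto simp: Ct_def intro: sum_nonneg)
  have "\<bar>\<Sum>\<sigma>\<in>Ps. epoch_noise c g \<sigma>\<bar>
      \<le> \<bar>\<Sum>\<sigma>\<in>Ps. epoch_noise c g \<sigma> + weighted_prefix_sum c g \<sigma>\<bar> + \<bar>\<Sum>\<sigma>\<in>Ps. weighted_prefix_sum c g \<sigma>\<bar>"
    using abs_triangle_ineq4 by (simp add: sum.distrib)
  also have "\<bar>\<Sum>\<sigma>\<in>Ps. epoch_noise c g \<sigma> + weighted_prefix_sum c g \<sigma>\<bar>
      \<le> Ct * (\<Sum>\<sigma>\<in>Ps. weighted_abs_prefix_sum c g \<sigma>)"
    using epoch_noise_permutation_bounds(2)[OF _ c1 assms(3)]
    by (auto simp: Ps_def Ct_def sum_distrib_left intro: order_trans[OF sum_abs sum_mono])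
  also have "\<dots> \<le> Ct * (card Ps * (real n * cm * (sqrt (real n) * G)))"
    using sum_permutations_weighted_abs_prefix_sum[OF assms(1,3-5)] \<open>0 \<le> Ct\<close>
    by (simp add: Ps_def mult_left_mono)
  also have "\<bar>\<Sum>\<sigma>\<in>Ps. weighted_prefix_sum c g \<sigma>\<bar> \<le> card Ps * (real n * cm * G)"
    using abs_sum_permutations_weighted_prefix_sum[OF assms(1,3,4)] by (simp add: Ps_def)
  finally show ?thesis
    by (simp add: Ps_def Ct_def algebra_simps)
qed

lemma finite_set_pmf_rr_iterate: "finite (set_pmf (rr_iterate n \<eta> a b t x0))"
  by (induction t) auto

lemma expectation_rr_iterate_Suc:
  fixes h :: "real \<Rightarrow> real"
  shows "measure_pmf.expectation (rr_iterate n \<eta> a b (Suc t) x0) h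
    = measure_pmf.expectation (rr_iterate n \<eta> a b t x0)
        (\<lambda>y. (\<Sum>\<sigma>\<in>permutations_of_set {..<n}. h (epoch \<eta> a b y \<sigma>)) / card (permutations_of_set {..<n}))"
proof -
  let ?M = "rr_iterate n \<eta> a b t x0"
  let ?Ps = "permutations_of_set {..<n}"
  let ?avg = "\<lambda>y. (\<Sum>\<sigma>\<in>?Ps. h (epoch \<eta> a b y \<sigma>)) / card ?Ps"
  have "measure_pmf.expectation (rr_iterate n \<eta> a b (Suc t) x0) h
      = (\<Sum>y\<in>set_pmf ?M. pmf ?M y * ?avg y)"
    unfolding rr_iterate.simps(2)
    by (subst pmf_expectation_bind[of "set_pmf ?M"])
      (auto simp: finite_set_pmf_rr_iterate integral_pmf_of_set)
  also have "\<dots> = measure_pmf.expectation ?M ?avg"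
    by (subst integral_measure_pmf_real[OF finite_set_pmf_rr_iterate]) (auto simp: mult.commute)
  finally show ?thesis .
qed

lemma affine_moment_recursion_bound:
  fixes m v :: "nat \<Rightarrow> real"
  assumes "0 \<le> P" and "P \<le> 1" and "0 \<le> \<zeta>" and "v 0 = (m 0)\<^sup>2"
    and m_Suc: "\<And>t. m (Suc t) = P * m t - \<mu>"
    and v_Suc: "\<And>t. v (Suc t) = P\<^sup>2 * v t - 2 * P * \<mu> * m t + \<zeta>"
  shows "v t \<le> (P ^ t * \<bar>m 0\<bar> + real t * \<bar>\<mu>\<bar>)\<^sup>2 + real t * \<zeta>"
proof -
  have "v t \<le> (m t)\<^sup>2 + real t * \<zeta> \<and> \<bar>m t\<bar> \<le> P ^ t * \<bar>m 0\<bar> + real t * \<bar>\<mu>\<bar>"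
  proof (induction t)
    case 0
    then show ?case using \<open>v 0 = (m 0)\<^sup>2\<close> by simp
  next
    case (Suc t)
    have "P\<^sup>2 * v t \<le> P\<^sup>2 * ((m t)\<^sup>2 + real t * \<zeta>)"
      using Suc.IH by (intro mult_left_mono) auto
    also have "\<dots> \<le> P\<^sup>2 * (m t)\<^sup>2 + real t * \<zeta>"
      using mult_left_le_one_le[of "real t * \<zeta>" "P\<^sup>2"] \<open>0 \<le> \<zeta>\<close> \<open>0 \<le> P\<close> \<open>P \<le> 1\<close>
      by (simp add: power_le_one distrib_left)
    finally have "v (Suc t) \<le> (m (Suc t))\<^sup>2 + real (Suc t) * \<zeta>"
      unfolding v_Suc m_Suc by (simp add: power2_eq_square algebra_simps add_increasing)
    moreover have "\<bar>m (Suc t)\<bar> \<le> P * \<bar>m t\<bar> + \<bar>\<mu>\<bar>"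
      unfolding m_Suc using \<open>0 \<le> P\<close> abs_triangle_ineq4[of "P * m t" \<mu>] by (simp add: abs_mult)
    moreover have "P * \<bar>m t\<bar> \<le> P * (P ^ t * \<bar>m 0\<bar> + real t * \<bar>\<mu>\<bar>)"
      using Suc.IH \<open>0 \<le> P\<close> by (intro mult_left_mono) auto
    moreover have "P * (real t * \<bar>\<mu>\<bar>) \<le> real t * \<bar>\<mu>\<bar>"
      using \<open>0 \<le> P\<close> \<open>P \<le> 1\<close> by (intro mult_left_le_one_le) auto
    ultimately show ?case
      by (simp add: algebra_simps)
  qed
  moreover have "(m t)\<^sup>2 \<le> (P ^ t * \<bar>m 0\<bar> + real t * \<bar>\<mu>\<bar>)\<^sup>2"
    using power_mono[OF conjunct2[OF calculation] abs_ge_zero, of 2] by simp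
  ultimately show ?thesis
    by linarith
qed

lemma rr_iterate_moments_Suc:
  fixes n :: nat and D :: "nat list \<Rightarrow> real"
  defines "Ps \<equiv> permutations_of_set {..<n}"
  defines "\<mu> \<equiv> (\<Sum>\<sigma>\<in>Ps. D \<sigma>) / card Ps" and "\<zeta> \<equiv> (\<Sum>\<sigma>\<in>Ps. (D \<sigma>)\<^sup>2) / card Ps"
  assumes epoch: "\<And>y \<sigma>. \<sigma> \<in> Ps \<Longrightarrow> epoch \<eta> a b y \<sigma> - xs = P * (y - xs) - D \<sigma>"
  shows "measure_pmf.expectation (rr_iterate n \<eta> a b (Suc t) x0) (\<lambda>x. x - xs)
           = P * measure_pmf.expectation (rr_iterate n \<eta> a b t x0) (\<lambda>x. x - xs) - \<mu>"
      (is ?first)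
    and "measure_pmf.expectation (rr_iterate n \<eta> a b (Suc t) x0) (\<lambda>x. (x - xs)\<^sup>2)
           = P\<^sup>2 * measure_pmf.expectation (rr_iterate n \<eta> a b t x0) (\<lambda>x. (x - xs)\<^sup>2)
             - 2 * P * \<mu> * measure_pmf.expectation (rr_iterate n \<eta> a b t x0) (\<lambda>x. x - xs) + \<zeta>"
      (is ?second)
proof -
  have [simp]: "integrable (rr_iterate n \<eta> a b t x0) h" for h :: "real \<Rightarrow> real"
    by (rule integrable_measure_pmf_finite[OF finite_set_pmf_rr_iterate])
  have "card Ps > 0"
    by (simp add: Ps_def)
  have "(\<Sum>\<sigma>\<in>Ps. epoch \<eta> a b y \<sigma> - xs) / card Ps = P * (y - xs) - \<mu>" for y
    using \<open>card Ps > 0\<close> by (simp add: epoch sum_subtractf sum.distrib \<mu>_def field_simps)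
  then show ?first
    unfolding expectation_rr_iterate_Suc Ps_def[symmetric] by (simp add: integral_diff)
  have "(\<Sum>\<sigma>\<in>Ps. (epoch \<eta> a b y \<sigma> - xs)\<^sup>2) / card Ps
      = P\<^sup>2 * (y - xs)\<^sup>2 - 2 * P * \<mu> * (y - xs) + \<zeta>" for y
  proof -
    have "(\<Sum>\<sigma>\<in>Ps. (epoch \<eta> a b y \<sigma> - xs)\<^sup>2)
        = (\<Sum>\<sigma>\<in>Ps. (P * (y - xs))\<^sup>2 - 2 * (P * (y - xs)) * D \<sigma> + (D \<sigma>)\<^sup>2)"
      by (intro sum.cong refl) (simp add: epoch power2_diff)
    also have "\<dots> = card Ps * (P * (y - xs))\<^sup>2 - 2 * (P * (y - xs)) * (\<Sum>\<sigma>\<in>Ps. D \<sigma>)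
        + (\<Sum>\<sigma>\<in>Ps. (D \<sigma>)\<^sup>2)"
      by (simp add: sum.distrib sum_subtractf sum_distrib_left)
    finally show ?thesis
      using \<open>card Ps > 0\<close> by (simp add: \<mu>_def \<zeta>_def field_simps power2_eq_square)
  qed
  then show ?second
    unfolding expectation_rr_iterate_Suc Ps_def[symmetric]
    by (simp add: integral_diff integral_add)
qed

lemma rr_iterate_second_moment:
  fixes n :: nat and D :: "nat list \<Rightarrow> real" and M S :: real
  defines "Ps \<equiv> permutations_of_set {..<n}"
  assumes "0 \<le> P" and "P \<le> 1"
    and epoch: "\<And>y \<sigma>. \<sigma> \<in> Ps \<Longrightarrow> epoch \<eta> a b y \<sigma> - xs = P * (y - xs) - D \<sigma>"
    and mean: "\<bar>\<Sum>\<sigma>\<in>Ps. D \<sigma>\<bar> \<le> card Ps * M" and square: "(\<Sum>\<sigma>\<in>Ps. (D \<sigma>)\<^sup>2) \<le> card Ps * S"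
  shows "measure_pmf.expectation (rr_iterate n \<eta> a b t x0) (\<lambda>x. (x - xs)\<^sup>2)
           \<le> (P ^ t * \<bar>x0 - xs\<bar> + real t * M)\<^sup>2 + real t * S"
proof -
  define \<mu> where "\<mu> = (\<Sum>\<sigma>\<in>Ps. D \<sigma>) / card Ps"
  define \<zeta> where "\<zeta> = (\<Sum>\<sigma>\<in>Ps. (D \<sigma>)\<^sup>2) / card Ps"
  have "card Ps > 0"
    by (simp add: Ps_def)
  then have "\<bar>\<mu>\<bar> \<le> M" "0 \<le> \<zeta>" "\<zeta> \<le> S"
    using mean square by (simp_all add: \<mu>_def \<zeta>_def abs_divide divide_le_eq sum_nonneg mult.commute)
  define m where "m t = measure_pmf.expectation (rr_iterate n \<eta> a b t x0) (\<lambda>x. x - xs)" for t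
  define v where "v t = measure_pmf.expectation (rr_iterate n \<eta> a b t x0) (\<lambda>x. (x - xs)\<^sup>2)" for t
  have "m (Suc t) = P * m t - \<mu>" for t
    unfolding m_def \<mu>_def Ps_def by (rule rr_iterate_moments_Suc(1)) (use epoch in \<open>simp add: Ps_def\<close>)
  moreover have "v (Suc t) = P\<^sup>2 * v t - 2 * P * \<mu> * m t + \<zeta>" for t
    unfolding v_def m_def \<mu>_def \<zeta>_def Ps_def
    by (rule rr_iterate_moments_Suc(2)) (use epoch in \<open>simp add: Ps_def\<close>)
  ultimately have "v t \<le> (P ^ t * \<bar>m 0\<bar> + real t * \<bar>\<mu>\<bar>)\<^sup>2 + real t * \<zeta>"
    using \<open>0 \<le> P\<close> \<open>P \<le> 1\<close> \<open>0 \<le> \<zeta>\<close> by (intro affine_moment_recursion_bound) (auto simp: m_def v_def)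
  then have "measure_pmf.expectation (rr_iterate n \<eta> a b t x0) (\<lambda>x. (x - xs)\<^sup>2)
      \<le> (P ^ t * \<bar>x0 - xs\<bar> + real t * \<bar>\<mu>\<bar>)\<^sup>2 + real t * \<zeta>"
    by (simp add: m_def v_def)
  also have "\<dots> \<le> (P ^ t * \<bar>x0 - xs\<bar> + real t * M)\<^sup>2 + real t * S"
    using \<open>\<bar>\<mu>\<bar> \<le> M\<close> \<open>\<zeta> \<le> S\<close> \<open>0 \<le> P\<close>
    by (intro add_mono power_mono mult_left_mono) auto
  finally show ?thesis .
qed

lemma Fobj_eq:
  "Fobj n a b x = (\<Sum>i<n. a i) / (2 * real n) * x\<^sup>2 - (\<Sum>i<n. b i) / real n * x"
  by (simp add: Fobj_def fcomp_def sum_subtractf sum_divide_distrib sum_distrib_right diff_divide_distrib)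

lemma Fobj_quadratic_minimizer:
  assumes "n > 0" and "lam > 0"
    and F: "\<forall>x. Fobj n a b x = lam / 2 * x ^ 2 - ((\<Sum>i<n. b i) / real n) * x"
    and min: "\<forall>y. Fobj n a b xs \<le> Fobj n a b y"
  shows "(\<Sum>i<n. a i) = real n * lam"
    and "(\<Sum>i<n. fcomp' a b i xs) = 0"
    and "Fobj n a b x - (INF y. Fobj n a b y) = lam / 2 * (x - xs)\<^sup>2"
proof -
  define B where "B = (\<Sum>i<n. b i) / real n"
  show sum_a: "(\<Sum>i<n. a i) = real n * lam"
    using F[rule_format, of 1] Fobj_eq[of n a b 1] \<open>n > 0\<close> by (simp add: field_simps)
  have F': "Fobj n a b y = lam / 2 * y\<^sup>2 - B * y" for y
    using F by (simp add: B_def)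
  have gap: "Fobj n a b y - Fobj n a b (B / lam) = lam / 2 * (y - B / lam)\<^sup>2" for y
    unfolding F' using \<open>lam > 0\<close> by (simp add: field_simps power2_eq_square)
  have "lam / 2 * (xs - B / lam)\<^sup>2 \<le> 0"
    using min[rule_format, of "B / lam"] gap[of xs] by linarith
  then have xs: "B = lam * xs"
    using \<open>lam > 0\<close> by (simp add: mult_le_0_iff field_simps)
  show "(\<Sum>i<n. fcomp' a b i xs) = 0"
    using sum_a xs \<open>n > 0\<close>
    by (simp add: fcomp'_def sum_subtractf B_def field_simps flip: sum_distrib_left)
  have "(INF y. Fobj n a b y) = Fobj n a b xs"
    using min by (intro cInf_eq_minimum) auto
  then show "Fobj n a b x - (INF y. Fobj n a b y) = lam / 2 * (x - xs)\<^sup>2"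
    using gap[of x] gap[of xs] xs \<open>lam > 0\<close> by simp
qed

text \<open>For n k = 2 the condition cannot hold, since it would force ln 2 \<le> 1/2.\<close>

lemma one_le_ln_of_step_condition:
  assumes "n \<ge> 2" and "k \<ge> 1" and "1 \<le> r" and "r \<le> real k / (2 * ln (real (n * k)))"
  shows "1 \<le> ln (real (n * k))"
proof (cases "n * k \<ge> 3")
  case True
  then have "exp 1 \<le> real (n * k)"
    using exp_le by (metis numeral_le_real_of_nat_iff order.trans)
  moreover have "0 < real (n * k)"
    using True by (simp only: of_nat_0_less_iff)
  ultimately show ?thesis
    by (subst ln_ge_iff) auto
next
  case False
  have "n \<le> n * k"
    using assms(2) by simp
  then have "n = 2"
    using False assms(1) by linarith
  then have "k = 1"
    using False assms(2) by simp
  with \<open>n = 2\<close> have "2 * ln (2::real) \<le> 1"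
    using order_trans[OF assms(3,4)] by simp
  then show ?thesis
    using ln2_ge_two_thirds by simp
qed

lemma prod_one_minus_le_exp:
  fixes c :: "'a \<Rightarrow> real"
  assumes "\<forall>i\<in>A. 0 \<le> c i \<and> c i \<le> 1"
  shows "0 \<le> (\<Prod>i\<in>A. 1 - c i)" and "(\<Prod>i\<in>A. 1 - c i) \<le> exp (- (\<Sum>i\<in>A. c i))"
proof -
  show "0 \<le> (\<Prod>i\<in>A. 1 - c i)"
    using assms by (intro prod_nonneg) auto
  have "(\<Prod>i\<in>A. 1 - c i) \<le> (\<Prod>i\<in>A. exp (- c i))"
    using assms exp_ge_add_one_self[of "- c _"] by (intro prod_mono) auto
  also have "\<dots> = exp (- (\<Sum>i\<in>A. c i))"
    by (cases "finite A") (simp_all add: exp_sum flip: sum_negf)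
  finally show "(\<Prod>i\<in>A. 1 - c i) \<le> exp (- (\<Sum>i\<in>A. c i))" .
qed

lemma sq_add_le: "((x::real) + y)\<^sup>2 \<le> 2 * x\<^sup>2 + 2 * y\<^sup>2"
  using zero_le_power2[of "x - y"] by (simp add: power2_eq_square algebra_simps)

lemma rr_mean_term_bound:
  fixes n k :: nat and lam L G l :: real
  defines "\<eta> \<equiv> l / (lam * real n * real k)"
  assumes "n \<ge> 1" and "k \<ge> 1" and "lam > 0" and "1 \<le> l"
  shows "lam * (real k * (\<eta> * (real n * (\<eta> * L) * G + l / real k * (real n * (\<eta> * L) * (sqrt (real n) * G)))))\<^sup>2
           \<le> 2 * l ^ 6 * (G\<^sup>2 * L\<^sup>2 / lam ^ 3) * (1 / (real n ^ 2 * real k ^ 2) + 1 / (real n * real k ^ 3))"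
proof -
  define K where "K = G\<^sup>2 * L\<^sup>2 / lam ^ 3"
  define A where "A = real k * \<eta> * real n * (\<eta> * L) * G"
  define B where "B = l * \<eta> * real n * (\<eta> * L) * (sqrt (real n) * G)"
  have pos: "0 < real n" "0 < real k" "0 \<le> K" "0 \<le> l ^ 4"
    using assms(2-5) by (auto simp: K_def)
  have "lam * A\<^sup>2 = l ^ 4 * (K / (real n ^ 2 * real k ^ 2))"
    using pos \<open>lam > 0\<close> by (simp add: A_def K_def \<eta>_def power_mult_distrib field_simps) algebra
  also have "\<dots> \<le> l ^ 6 * (K / (real n ^ 2 * real k ^ 2))"
    using pos \<open>1 \<le> l\<close> by (intro mult_right_mono power_increasing) auto
  finally have A: "lam * A\<^sup>2 \<le> l ^ 6 * (K / (real n ^ 2 * real k ^ 2))" .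
  have "lam * B\<^sup>2 = l ^ 6 * (K / (real n * real k ^ 3)) / real k"
    using pos \<open>lam > 0\<close> by (simp add: B_def K_def \<eta>_def power_mult_distrib field_simps) algebra
  also have "\<dots> \<le> l ^ 6 * (K / (real n * real k ^ 3))"
    using divide_left_mono[of 1 "real k" "l ^ 6 * (K / (real n * real k ^ 3))"] pos \<open>1 \<le> l\<close> \<open>k \<ge> 1\<close>
    by simp
  finally have B: "lam * B\<^sup>2 \<le> l ^ 6 * (K / (real n * real k ^ 3))" .
  have "real k * (\<eta> * (real n * (\<eta> * L) * G + l / real k * (real n * (\<eta> * L) * (sqrt (real n) * G))))
      = A + B"
    using pos by (simp add: A_def B_def field_simps)
  then have "lam * (real k * (\<eta> * (real n * (\<eta> * L) * G + l / real k * (real n * (\<eta> * L) * (sqrt (real n) * G)))))\<^sup>2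
      = lam * (A + B)\<^sup>2"
    by simp
  also have "\<dots> \<le> lam * (2 * A\<^sup>2 + 2 * B\<^sup>2)"
    using \<open>lam > 0\<close> sq_add_le by (intro mult_left_mono) auto
  also have "\<dots> \<le> 2 * (l ^ 6 * (K / (real n ^ 2 * real k ^ 2))) + 2 * (l ^ 6 * (K / (real n * real k ^ 3)))"
    using A B by (simp add: distrib_left)
  finally show ?thesis
    unfolding K_def[symmetric] by (simp add: algebra_simps)
qed

lemma rr_bound_arithmetic:
  fixes n k :: nat and lam L G l y :: real
  defines "\<eta> \<equiv> l / (lam * real n * real k)"
  assumes "n \<ge> 1" and "k \<ge> 1" and "lam > 0" and "1 \<le> l"
  shows "lam / 2 * ((1 / real (n * k) * \<bar>y\<bar>
             + real k * (\<eta> * (real n * (\<eta> * L) * G + l / real k * (real n * (\<eta> * L) * (sqrt (real n) * G)))))\<^sup>2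
           + real k * (\<eta>\<^sup>2 * (real n ^ 3 * (\<eta> * L)\<^sup>2 * G\<^sup>2)))
         \<le> 3 * l ^ 6 * (lam / (real n ^ 2 * real k ^ 2) * y ^ 2
             + G ^ 2 * L ^ 2 / lam ^ 3 * (1 / (real n ^ 2 * real k ^ 2) + 1 / (real n * real k ^ 3)))"
proof -
  define K where "K = G\<^sup>2 * L\<^sup>2 / lam ^ 3"
  define Y where "Y = 1 / real (n * k) * \<bar>y\<bar>"
  define M where "M = real k * (\<eta> * (real n * (\<eta> * L) * G + l / real k * (real n * (\<eta> * L) * (sqrt (real n) * G))))"
  define X where "X = lam / (real n ^ 2 * real k ^ 2) * y ^ 2"
  define U where "U = K / (real n ^ 2 * real k ^ 2)"
  define V where "V = K / (real n * real k ^ 3)"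
  have pos: "0 < real n" "0 < real k" "1 \<le> l ^ 6"
    using assms(2-5) by auto
  then have nonneg: "0 \<le> X" "0 \<le> l ^ 6 * X" "0 \<le> l ^ 6 * U" "0 \<le> l ^ 4 * V" "0 \<le> V"
    using \<open>lam > 0\<close> \<open>1 \<le> l\<close> by (simp_all add: X_def U_def V_def K_def)
  have "lam * Y\<^sup>2 = X"
    by (simp add: X_def Y_def power_mult_distrib power_divide)
  also have "\<dots> \<le> l ^ 6 * X"
    using mult_right_mono[OF pos(3) nonneg(1)] by simp
  finally have start: "lam * Y\<^sup>2 \<le> l ^ 6 * X" .
  have "lam * M\<^sup>2 \<le> 2 * l ^ 6 * K * (1 / (real n ^ 2 * real k ^ 2) + 1 / (real n * real k ^ 3))"
    using rr_mean_term_bound[OF assms(2-5), of L G] by (simp add: M_def K_def \<eta>_def)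
  then have mean: "lam * M\<^sup>2 \<le> 2 * (l ^ 6 * U) + 2 * (l ^ 6 * V)"
    by (simp add: U_def V_def algebra_simps)
  have "lam / 2 * (real k * (\<eta>\<^sup>2 * (real n ^ 3 * (\<eta> * L)\<^sup>2 * G\<^sup>2))) = l ^ 4 * V / 2"
    using pos \<open>lam > 0\<close> by (simp add: V_def K_def \<eta>_def power_mult_distrib field_simps) algebra
  also have "\<dots> \<le> l ^ 6 * V"
    using nonneg(4) mult_right_mono[OF power_increasing[OF _ \<open>1 \<le> l\<close>, of 4 6] nonneg(5)]
    by simp
  finally have variance: "lam / 2 * (real k * (\<eta>\<^sup>2 * (real n ^ 3 * (\<eta> * L)\<^sup>2 * G\<^sup>2))) \<le> l ^ 6 * V" .
  have split: "lam / 2 * (Y + M)\<^sup>2 \<le> lam * Y\<^sup>2 + lam * M\<^sup>2"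
    using mult_left_mono[OF sq_add_le[of Y M], of "lam / 2"] \<open>lam > 0\<close> by (simp add: algebra_simps)
  have lhs: "lam / 2 * ((Y + M)\<^sup>2 + real k * (\<eta>\<^sup>2 * (real n ^ 3 * (\<eta> * L)\<^sup>2 * G\<^sup>2)))
      = lam / 2 * (Y + M)\<^sup>2 + lam / 2 * (real k * (\<eta>\<^sup>2 * (real n ^ 3 * (\<eta> * L)\<^sup>2 * G\<^sup>2)))"
    by (simp add: distrib_left)
  have rhs: "3 * l ^ 6 * (X + K * (1 / (real n ^ 2 * real k ^ 2) + 1 / (real n * real k ^ 3)))
      = 3 * (l ^ 6 * X) + 3 * (l ^ 6 * U) + 3 * (l ^ 6 * V)"
    by (simp add: U_def V_def algebra_simps)
  show ?thesis
    unfolding Y_def[symmetric] M_def[symmetric] X_def[symmetric] K_def[symmetric] lhs rhs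
    using split start mean variance nonneg by linarith
qed

lemma rr_iterate_quadratic_second_moment:
  fixes n :: nat and a b :: "nat \<Rightarrow> real" and \<eta> L G :: real
  defines "M \<equiv> \<eta> * (real n * (\<eta> * L) * G + \<eta> * (\<Sum>i<n. a i) * (real n * (\<eta> * L) * (sqrt (real n) * G)))"
    and "S \<equiv> \<eta>\<^sup>2 * (real n ^ 3 * (\<eta> * L)\<^sup>2 * G\<^sup>2)"
  assumes "0 \<le> \<eta>" and "\<eta> * L \<le> 1" and "0 \<le> G"
    and a: "\<forall>i<n. 0 \<le> a i \<and> a i \<le> L"
    and sum_g: "(\<Sum>i<n. fcomp' a b i xs) = 0" and g: "\<forall>i<n. \<bar>fcomp' a b i xs\<bar> \<le> G"
  shows "measure_pmf.expectation (rr_iterate n \<eta> a b t x0) (\<lambda>x. (x - xs)\<^sup>2)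
           \<le> (exp (- (\<eta> * (\<Sum>i<n. a i))) ^ t * \<bar>x0 - xs\<bar> + real t * M)\<^sup>2 + real t * S"
proof -
  define c where "c i = \<eta> * a i" for i
  define g where "g i = fcomp' a b i xs" for i
  define Ps where "Ps = permutations_of_set {..<n}"
  define P where "P = (\<Prod>i<n. 1 - c i)"
  have c: "\<forall>i<n. 0 \<le> c i \<and> c i \<le> \<eta> * L"
    using a \<open>0 \<le> \<eta>\<close> by (simp add: c_def mult_left_mono)
  have sum_c: "(\<Sum>i<n. c i) = \<eta> * (\<Sum>i<n. a i)"
    by (simp add: c_def sum_distrib_left)
  have "0 \<le> P" and "P \<le> exp (- (\<eta> * (\<Sum>i<n. a i)))"
    using prod_one_minus_le_exp[of "{..<n}" c] c \<open>\<eta> * L \<le> 1\<close> sum_c by (force simp: P_def)+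
  have "P \<le> 1"
    using c \<open>\<eta> * L \<le> 1\<close> by (force simp: P_def intro!: prod_le_1)
  have epoch: "epoch \<eta> a b y \<sigma> - xs = P * (y - xs) - \<eta> * epoch_noise c g \<sigma>" if "\<sigma> \<in> Ps" for y \<sigma>
    using epoch_minus_fixed_point[of \<eta> a b y \<sigma> xs] permutations_of_setD[OF that[unfolded Ps_def]]
    by (simp add: P_def c_def[abs_def] g_def[abs_def] prod.distinct_set_conv_list[symmetric])
  have "\<bar>\<Sum>\<sigma>\<in>Ps. \<eta> * epoch_noise c g \<sigma>\<bar> = \<eta> * \<bar>\<Sum>\<sigma>\<in>Ps. epoch_noise c g \<sigma>\<bar>"
    using \<open>0 \<le> \<eta>\<close> by (simp add: abs_mult flip: sum_distrib_left)
  also have "\<dots> \<le> \<eta> * (card Ps * (real n * (\<eta> * L) * G + (\<Sum>i<n. c i) * (real n * (\<eta> * L) * (sqrt (real n) * G))))"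
    using abs_sum_permutations_epoch_noise[OF c \<open>\<eta> * L \<le> 1\<close> sum_g[folded g_def] g[folded g_def] \<open>0 \<le> G\<close>]
      \<open>0 \<le> \<eta>\<close> by (intro mult_left_mono) (simp_all add: Ps_def)
  finally have mean: "\<bar>\<Sum>\<sigma>\<in>Ps. \<eta> * epoch_noise c g \<sigma>\<bar> \<le> card Ps * M"
    by (simp add: M_def sum_c mult_ac)
  have square: "(\<Sum>\<sigma>\<in>Ps. (\<eta> * epoch_noise c g \<sigma>)\<^sup>2) \<le> card Ps * S"
    using mult_left_mono[OF sum_permutations_epoch_noise_sq[OF c \<open>\<eta> * L \<le> 1\<close>
          sum_g[folded g_def] g[folded g_def]] zero_le_power2[of \<eta>]]
    by (simp add: S_def Ps_def power_mult_distrib mult_ac flip: sum_distrib_left)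
  have "0 \<le> real (card Ps) * M"
    using order_trans[OF abs_ge_zero mean] .
  moreover have "0 < real (card Ps)"
    by (simp add: Ps_def)
  ultimately have "0 \<le> M"
    by (simp add: zero_le_mult_iff)
  have "measure_pmf.expectation (rr_iterate n \<eta> a b t x0) (\<lambda>x. (x - xs)\<^sup>2)
      \<le> (P ^ t * \<bar>x0 - xs\<bar> + real t * M)\<^sup>2 + real t * S"
    by (rule rr_iterate_second_moment[where D = "\<lambda>\<sigma>. \<eta> * epoch_noise c g \<sigma>"])
      (use \<open>0 \<le> P\<close> \<open>P \<le> 1\<close> epoch mean square in \<open>auto simp: Ps_def\<close>)
  also have "\<dots> \<le> (exp (- (\<eta> * (\<Sum>i<n. a i))) ^ t * \<bar>x0 - xs\<bar> + real t * M)\<^sup>2 + real t * S"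
    using \<open>0 \<le> P\<close> \<open>P \<le> exp _\<close> \<open>0 \<le> M\<close>
    by (intro add_mono power_mono mult_right_mono order_refl add_nonneg_nonneg) auto
  finally show ?thesis .
qed

lemma rr_quadratic_second_moment_bound:
  fixes n k :: nat and a b :: "nat \<Rightarrow> real" and lam L G x0 xs :: real
  defines "l \<equiv> ln (real (n * k))"
  assumes "n \<ge> 2" and "k \<ge> 1" and "lam > 0" and "0 \<le> G" and "1 \<le> l"
    and a: "\<forall>i<n. 0 \<le> a i \<and> a i \<le> L" and sum_a: "(\<Sum>i<n. a i) = real n * lam"
    and sum_g: "(\<Sum>i<n. fcomp' a b i xs) = 0" and g: "\<forall>i<n. \<bar>fcomp' a b i xs\<bar> \<le> G"
    and step: "L * l \<le> lam * real k / 2"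
  shows "lam / 2 * measure_pmf.expectation (rr_iterate n (l / (lam * real n * real k)) a b k x0)
             (\<lambda>x. (x - xs)\<^sup>2)
           \<le> 3 * l ^ 6 * (lam / (real n ^ 2 * real k ^ 2) * (x0 - xs) ^ 2
               + G ^ 2 * L ^ 2 / lam ^ 3 * (1 / (real n ^ 2 * real k ^ 2) + 1 / (real n * real k ^ 3)))"
proof -
  define \<eta> where "\<eta> = l / (lam * real n * real k)"
  have pos: "0 < real n" "0 < real k"
    using assms(2,3) by auto
  have "0 \<le> \<eta>"
    using pos \<open>lam > 0\<close> \<open>1 \<le> l\<close> by (simp add: \<eta>_def)
  have "\<eta> * L = (L * l) / (lam * real n * real k)"
    by (simp add: \<eta>_def)
  also have "\<dots> \<le> (lam * real k / 2) / (lam * real n * real k)"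
    using step pos \<open>lam > 0\<close> by (intro divide_right_mono) auto
  also have "\<dots> \<le> 1"
    using pos \<open>lam > 0\<close> \<open>n \<ge> 2\<close> by (simp add: field_simps)
  finally have "\<eta> * L \<le> 1" .
  have "\<eta> * (\<Sum>i<n. a i) = l / real k"
    using sum_a pos \<open>lam > 0\<close> by (simp add: \<eta>_def)
  moreover have "exp (- (l / real k)) ^ k = 1 / real (n * k)"
    using pos by (simp add: l_def exp_of_nat_mult[symmetric] exp_minus field_simps)
  ultimately have "measure_pmf.expectation (rr_iterate n \<eta> a b k x0) (\<lambda>x. (x - xs)\<^sup>2)
      \<le> (1 / real (n * k) * \<bar>x0 - xs\<bar>
            + real k * (\<eta> * (real n * (\<eta> * L) * G + l / real k * (real n * (\<eta> * L) * (sqrt (real n) * G)))))\<^sup>2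
        + real k * (\<eta>\<^sup>2 * (real n ^ 3 * (\<eta> * L)\<^sup>2 * G\<^sup>2))"
    using rr_iterate_quadratic_second_moment[OF \<open>0 \<le> \<eta>\<close> \<open>\<eta> * L \<le> 1\<close> \<open>0 \<le> G\<close> a sum_g g, of k x0]
    by simp
  then have "lam / 2 * measure_pmf.expectation (rr_iterate n \<eta> a b k x0) (\<lambda>x. (x - xs)\<^sup>2)
      \<le> lam / 2 * ((1 / real (n * k) * \<bar>x0 - xs\<bar>
            + real k * (\<eta> * (real n * (\<eta> * L) * G + l / real k * (real n * (\<eta> * L) * (sqrt (real n) * G)))))\<^sup>2
        + real k * (\<eta>\<^sup>2 * (real n ^ 3 * (\<eta> * L)\<^sup>2 * G\<^sup>2)))"
    using \<open>lam > 0\<close> by (intro mult_left_mono) auto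
  also have "\<dots> \<le> 3 * l ^ 6 * (lam / (real n ^ 2 * real k ^ 2) * (x0 - xs) ^ 2
      + G ^ 2 * L ^ 2 / lam ^ 3 * (1 / (real n ^ 2 * real k ^ 2) + 1 / (real n * real k ^ 3)))"
    unfolding \<eta>_def using \<open>n \<ge> 2\<close> by (intro rr_bound_arithmetic \<open>k \<ge> 1\<close> \<open>lam > 0\<close> \<open>1 \<le> l\<close>) auto
  finally show ?thesis
    unfolding \<eta>_def .
qed

lemma rr_expected_gap_bound:
  fixes n k :: nat and a b :: "nat \<Rightarrow> real" and lam L G x0 xs :: real
  assumes "n \<ge> 2" and "k \<ge> 1" and "lam > 0" and "G > 0" and a: "\<forall>i<n. 0 \<le> a i \<and> a i \<le> L"
    and F: "\<forall>x. Fobj n a b x = lam / 2 * x ^ 2 - ((\<Sum>i<n. b i) / real n) * x"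
    and min: "\<forall>y. Fobj n a b xs \<le> Fobj n a b y" and g: "\<forall>i<n. \<bar>fcomp' a b i xs\<bar> \<le> G"
    and cond: "L / lam \<le> real k / (2 * ln (real (n * k)))"
  shows "measure_pmf.expectation
          (rr_iterate n (ln (real (n * k)) / (lam * real n * real k)) a b k x0)
          (\<lambda>x. Fobj n a b x - (INF y. Fobj n a b y))
        \<le> 3 * (ln (real (n * k))) ^ 6 *
          (lam / (real n ^ 2 * real k ^ 2) * (x0 - xs) ^ 2
           + G ^ 2 * L ^ 2 / lam ^ 3 * (1 / (real n ^ 2 * real k ^ 2) + 1 / (real n * real k ^ 3)))"
proof -
  have "n > 0"
    using \<open>n \<ge> 2\<close> by simp
  note quadratic = Fobj_quadratic_minimizer[OF \<open>n > 0\<close> \<open>lam > 0\<close> F min]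
  have "real n * lam \<le> real n * L"
    using a sum_mono[of "{..<n}" a "\<lambda>_. L"] by (simp add: quadratic(1))
  then have "1 \<le> L / lam"
    using \<open>n > 0\<close> \<open>lam > 0\<close> by simp
  then have ln: "1 \<le> ln (real (n * k))"
    using one_le_ln_of_step_condition[OF \<open>n \<ge> 2\<close> \<open>k \<ge> 1\<close> _ cond] by blast
  have step: "L * ln (real (n * k)) \<le> lam * real k / 2"
    using cond \<open>lam > 0\<close> ln by (simp add: field_simps)
  have gap: "measure_pmf.expectation M (\<lambda>x. Fobj n a b x - (INF y. Fobj n a b y))
      = lam / 2 * measure_pmf.expectation M (\<lambda>x. (x - xs)\<^sup>2)" for M
    by (simp add: quadratic(3))
  show ?thesis
    unfolding gap
    using rr_quadratic_second_moment_bound[OF \<open>n \<ge> 2\<close> \<open>k \<ge> 1\<close> \<open>lam > 0\<close> less_imp_le[OF \<open>G > 0\<close>]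
        ln a quadratic(1,2) g step] .
qed

theorem theorem5:
  shows "\<exists>C::real. \<exists>p::nat. C > 0 \<and>
    (\<forall>(n::nat) (k::nat) (a::nat \<Rightarrow> real) (b::nat \<Rightarrow> real) (lam::real) (L::real) (G::real)
        (x0::real) (xs::real).
      n \<ge> 2 \<longrightarrow> k \<ge> 1 \<longrightarrow> lam > 0 \<longrightarrow> L > 0 \<longrightarrow> G > 0 \<longrightarrow>
      (\<forall>i<n. 0 \<le> a i \<and> a i \<le> L) \<longrightarrow>
      (\<forall>x. Fobj n a b x = lam / 2 * x ^ 2 - ((\<Sum>i<n. b i) / real n) * x) \<longrightarrow>
      (\<forall>y. Fobj n a b xs \<le> Fobj n a b y) \<longrightarrow>
      (\<forall>i<n. \<bar>fcomp' a b i xs\<bar> \<le> G) \<longrightarrow>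
      L / lam \<le> real k / (2 * ln (real (n * k))) \<longrightarrow>
      measure_pmf.expectation
          (rr_iterate n (ln (real (n * k)) / (lam * real n * real k)) a b k x0)
          (\<lambda>x. Fobj n a b x - (INF y. Fobj n a b y))
        \<le> C * (ln (real (n * k))) ^ p *
          (lam / (real n ^ 2 * real k ^ 2) * (x0 - xs) ^ 2
           + G ^ 2 * L ^ 2 / lam ^ 3 * (1 / (real n ^ 2 * real k ^ 2) + 1 / (real n * real k ^ 3))))"
proof (intro exI conjI allI impI)
  show "(3::real) > 0" by simp
qed (rule rr_expected_gap_bound)

end
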